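(* In Algorithm MV (see context), WHP every correct process decides.
   Context: System and adversary: a well-known static set $\Pi$ of $n$ processes; an adversary may adaptively corrupt up to $f=(\frac13-\epsilon)n$ processes during a run, where $\frac{1}{2\ln n}<\epsilon<\frac13$. Corrupted (Byzantine) processes may deviate arbitrarily; uncorrupted processes are correct. Once the adversary corrupts a process it cannot replace messages that process already sent while correct. Every pair of processes is connected by a reliable authenticated link; the network is asynchronous. There is a trusted PKI; the adversary is computationally bounded; $\langle v\rangle_i$ denotes $v$ signed by $p_i$. Validated committee sampling: each $p_i$ has a private function $\mathit{sample}_i(s,\lambda)$ returning $\langle v_i,\sigma_i\rangle$ with $v_i\in\{\mathit{true},\mathit{false}\}$ ($p_i$ is "sampled" iff $v_i=\mathit{true}$, probability $\lambda/n$) and an unforgeable publicly verifiable proof $\sigma_i$; "validly sampled $p_j$" means the message carries a valid such proof. Let $C(s,\lambda)$ be the committee for $s,\lambda$. Parameters: $\lambda=8\ln n$; $\frac1\lambda<d<\frac\epsilon3-\frac1{3\lambda}$; $W=\lceil(\frac23+3d)\lambda\rceil$, $B=\lfloor(\frac13-d)\lambda\rfloor$. Assumed WHP for each committee: (S3) at least $W$ members are correct; (S4) at most $B$ members are Byzantine; (S5) any two $W$-subsets of the committee intersect in at least $B+1$ processes. WHP means with probability tending to $1$ as $n\to\infty$. The binary BA used is a black-box Binary Strong BA WHP: WHP strong unanimity (if all correct processes propose the same bit, any deciding correct process decides it), agreement, and termination. Algorithm MV (code for $p_i$ with input $v_i$; local: $\mathit{count}=0$, empty sets $\mathit{init\text{-}set},\mathit{init\text{-}values\text{-}set},\mathit{converge\text{-}set}$):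 (1) If $p_i$ is sampled for $(\textsc{init},\lambda)$, broadcast $\langle\textsc{init},v_i\rangle_i$. (2) On receiving $\langle\textsc{init},v_j\rangle_j$ from validly sampled $p_j$: add $j$ to $\mathit{init\text{-}set}$, $v_j$ to $\mathit{init\text{-}values\text{-}set}$. If $p_i$ is sampled for $(\textsc{converge},\lambda)$ and $|\mathit{init\text{-}set}|=W$ for the first time: if $\mathit{init\text{-}values\text{-}set}=\{v_i\}$, batch the $W$ signed \textsc{init} messages into $QC_{v_i}$ and send $\langle\textsc{converge},\mathit{true},QC_{v_i}\rangle_i$ to all; else send $\langle\textsc{converge},\mathit{false},\bot\rangle_i$ to all. (3) On receiving $\langle\textsc{converge},\mathit{is\_content},QC_v\rangle_j$ from validly sampled $p_j$: add $j$ to $\mathit{converge\text{-}set}$; if $\mathit{is\_content}=\mathit{true}$ increment $\mathit{count}$. When $|\mathit{converge\text{-}set}|=W$ for the first time: $\mathit{alert}\gets(\mathit{count}<B+1)$; run binary BA on $\mathit{alert}$; if the output is $\mathit{true}$ decide $\bot$; else wait for some $\langle\textsc{converge},\mathit{true},QC_v\rangle_j$ from a validly sampled $p_j$ and decide $v$. A valid $QC_v$ consists of $W$ signed \textsc{init} messages on $v$ from $W$ distinct validly sampled processes. *)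

theory Defs
  imports "HOL-Probability.Probability"
begin

text \<open>Processes are the naturals below n. Tags of the two committees used by MV.\<close>

datatype tag = InitT | ConvT

text \<open>Messages. A quorum certificate QC on v is represented by the value v and the set of
  processes whose signed INIT messages on v it batches; bottom is None.\<close>

datatype 'v msg = Init 'v | Converge bool "('v \<times> nat set) option"

fun same_kind :: "'v msg \<Rightarrow> 'v msg \<Rightarrow> bool" where
  "same_kind (Init _) (Init _) = True"
| "same_kind (Converge _ _) (Converge _ _) = True"
| "same_kind _ _ = False"

text \<open>A run (one possible outcome of the random sampling and the adversary's behaviour).
  corrupted: the processes corrupted at some point (Byzantine); everybody else is correct.
  sampled t j: the value v_j of sample_j(t, lambda).
  input j: the input of p_j.
  deliv i t: the message (with its authenticated sender) delivered to p_i at local step t.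
  ba_out i: the (eventual) output of the binary BA black box at p_i, if any.\<close>

record 'v run =
  corrupted :: "nat set"
  sampled :: "tag \<Rightarrow> nat \<Rightarrow> bool"
  input :: "nat \<Rightarrow> 'v"
  deliv :: "nat \<Rightarrow> nat \<Rightarrow> (nat \<times> 'v msg) option"
  ba_out :: "nat \<Rightarrow> bool option"

definition lam :: "nat \<Rightarrow> real" where
  "lam n = 8 * ln (real n)"

definition Wq :: "(nat \<Rightarrow> real) \<Rightarrow> nat \<Rightarrow> nat" where
  "Wq d n = nat \<lceil>(2/3 + 3 * d n) * lam n\<rceil>"

definition Bq :: "(nat \<Rightarrow> real) \<Rightarrow> nat \<Rightarrow> nat" where
  "Bq d n = nat \<lfloor>(1/3 - d n) * lam n\<rfloor>"

definition committee :: "nat \<Rightarrow> 'v run \<Rightarrow> tag \<Rightarrow> nat set" where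
  "committee n r t = {j. j < n \<and> sampled r t j}"

definition processed :: "'v run \<Rightarrow> nat \<Rightarrow> nat \<Rightarrow> nat \<Rightarrow> 'v msg \<Rightarrow> bool" where
  "processed r i t j m \<longleftrightarrow> deliv r i t = Some (j, m) \<and>
     \<not> (\<exists>t' < t. \<exists>m'. deliv r i t' = Some (j, m') \<and> same_kind m m')"

text \<open>Local variables of p_i after processing the messages delivered at steps before t.\<close>

definition init_set :: "'v run \<Rightarrow> nat \<Rightarrow> nat \<Rightarrow> nat set" where
  "init_set r i t = {j. \<exists>t' < t. \<exists>v. processed r i t' j (Init v) \<and> sampled r InitT j}"

definition init_values :: "'v run \<Rightarrow> nat \<Rightarrow> nat \<Rightarrow> 'v set" where
  "init_values r i t = {v. \<exists>t' < t. \<exists>j. processed r i t' j (Init v) \<and> sampled r InitT j}"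

definition converge_set :: "'v run \<Rightarrow> nat \<Rightarrow> nat \<Rightarrow> nat set" where
  "converge_set r i t = {j. \<exists>t' < t. \<exists>b q. processed r i t' j (Converge b q) \<and> sampled r ConvT j}"

definition count :: "'v run \<Rightarrow> nat \<Rightarrow> nat \<Rightarrow> nat" where
  "count r i t = card {j. \<exists>t' < t. \<exists>q. processed r i t' j (Converge True q) \<and> sampled r ConvT j}"

definition init_trigger :: "nat \<Rightarrow> 'v run \<Rightarrow> nat \<Rightarrow> nat option" where
  "init_trigger W r i =
     (if \<exists>t. W \<le> card (init_set r i t) then Some (LEAST t. W \<le> card (init_set r i t)) else None)"

definition conv_trigger :: "nat \<Rightarrow> 'v run \<Rightarrow> nat \<Rightarrow> nat option" where
  "conv_trigger W r i =
     (if \<exists>t. W \<le> card (converge_set r i t) then Some (LEAST t. W \<le> card (converge_set r i t)) else None)"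

definition correct_sends :: "nat \<Rightarrow> 'v run \<Rightarrow> nat \<Rightarrow> 'v msg \<Rightarrow> bool" where
  "correct_sends W r j m \<longleftrightarrow>
     (sampled r InitT j \<and> m = Init (input r j)) \<or>
     (sampled r ConvT j \<and> (\<exists>t. init_trigger W r j = Some t \<and>
        m = (if init_values r j t = {input r j}
             then Converge True (Some (input r j, init_set r j t))
             else Converge False None)))"

definition ba_in :: "nat \<Rightarrow> nat \<Rightarrow> 'v run \<Rightarrow> nat \<Rightarrow> bool option" where
  "ba_in W B r i = (case conv_trigger W r i of None \<Rightarrow> None
                     | Some t \<Rightarrow> Some (count r i t < B + 1))"

text \<open>A QC on v is valid if it consists of W genuinely signed INIT messages on v from W distinct
  validly sampled processes; by unforgeability a correct process only ever signs INIT on its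
  own input, while a Byzantine process may sign anything.\<close>

definition valid_qc :: "nat \<Rightarrow> 'v run \<Rightarrow> 'v \<Rightarrow> nat set \<Rightarrow> bool" where
  "valid_qc W r v S \<longleftrightarrow> card S = W \<and>
     (\<forall>k\<in>S. sampled r InitT k \<and> (k \<notin> corrupted r \<longrightarrow> input r k = v))"

text \<open>p_i decides: either BA outputs true (decide bottom), or BA outputs false and p_i has
  received some CONVERGE true message with a valid QC from a validly sampled process.\<close>

definition decides :: "nat \<Rightarrow> 'v run \<Rightarrow> nat \<Rightarrow> bool" where
  "decides W r i \<longleftrightarrow> ba_out r i = Some True \<or>
     (ba_out r i = Some False \<and>
      (\<exists>t j v S. processed r i t j (Converge True (Some (v, S))) \<and> sampled r ConvT j \<and>
                 valid_qc W r v S))"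

definition valid_run :: "nat \<Rightarrow> nat \<Rightarrow> nat \<Rightarrow> real \<Rightarrow> 'v run \<Rightarrow> bool" where
  "valid_run n W B eps r \<longleftrightarrow>
     corrupted r \<subseteq> {..<n} \<and>
     real (card (corrupted r)) \<le> (1/3 - eps) * real n \<and>
     (\<forall>i t j m. i < n \<longrightarrow> deliv r i t = Some (j, m) \<longrightarrow> j < n) \<and>
     (\<forall>i j m. i < n \<longrightarrow> j < n \<longrightarrow> i \<notin> corrupted r \<longrightarrow> j \<notin> corrupted r \<longrightarrow>
        correct_sends W r j m \<longrightarrow> (\<exists>t. deliv r i t = Some (j, m))) \<and>
     (\<forall>i j m t. i < n \<longrightarrow> j < n \<longrightarrow> i \<notin> corrupted r \<longrightarrow> j \<notin> corrupted r \<longrightarrow>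
        deliv r i t = Some (j, m) \<longrightarrow> correct_sends W r j m) \<and>
     (\<forall>i < n. i \<notin> corrupted r \<longrightarrow> ba_out r i \<noteq> None \<longrightarrow> ba_in W B r i \<noteq> None)"

definition ba_termination :: "nat \<Rightarrow> nat \<Rightarrow> nat \<Rightarrow> 'v run \<Rightarrow> bool" where
  "ba_termination n W B r \<longleftrightarrow>
     (\<forall>i < n. i \<notin> corrupted r \<longrightarrow> ba_in W B r i \<noteq> None) \<longrightarrow>
     (\<forall>i < n. i \<notin> corrupted r \<longrightarrow> ba_out r i \<noteq> None)"

definition ba_agreement :: "nat \<Rightarrow> 'v run \<Rightarrow> bool" where
  "ba_agreement n r \<longleftrightarrow>
     (\<forall>i < n. \<forall>j < n. i \<notin> corrupted r \<longrightarrow> j \<notin> corrupted r \<longrightarrow>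
        ba_out r i \<noteq> None \<longrightarrow> ba_out r j \<noteq> None \<longrightarrow> ba_out r i = ba_out r j)"

definition ba_strong_unanimity :: "nat \<Rightarrow> nat \<Rightarrow> nat \<Rightarrow> 'v run \<Rightarrow> bool" where
  "ba_strong_unanimity n W B r \<longleftrightarrow>
     (\<forall>b. (\<forall>i < n. i \<notin> corrupted r \<longrightarrow> ba_in W B r i = Some b) \<longrightarrow>
          (\<forall>i < n. i \<notin> corrupted r \<longrightarrow> ba_out r i \<noteq> None \<longrightarrow> ba_out r i = Some b))"

definition whp :: "(nat \<Rightarrow> 'a measure) \<Rightarrow> (nat \<Rightarrow> 'a \<Rightarrow> bool) \<Rightarrow> bool" where
  "whp M P \<longleftrightarrow> (\<exists>E. (\<forall>n. E n \<in> sets (M n) \<and> E n \<subseteq> {x \<in> space (M n). P n x}) \<and>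
                     (\<lambda>n. measure (M n) (E n)) \<longlonglongrightarrow> 1)"

end

theory Submission
  imports Defs
begin

text \<open>Every correct process reaches both W-thresholds, because each committee contains at least W
  correct members whose messages are eventually delivered; so every correct process proposes to
  the binary BA, which therefore terminates. If it outputs true the process decides bottom. If it
  outputs false, strong unanimity shows that some correct process proposed false, i.e. counted
  more than B content CONVERGE messages; as at most B members of the CONVERGE committee are
  Byzantine, one of them comes from a correct process. Its QC is a genuine batch of W signed INIT
  messages on its own input, and its message reaches every correct process, which then decides
  that value.\<close>

lemma whp_mono:
  assumes "whp M P" and "\<And>n r. r \<in> space (M n) \<Longrightarrow> P n r \<Longrightarrow> Q n r"
  shows "whp M Q"
  using assms unfolding whp_def by blast

lemma prob_space_prob_Int_lower:
  assumes "prob_space M" "A \<in> sets M" "B \<in> sets M"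
  shows "measure M A + measure M B - 1 \<le> measure M (A \<inter> B)"
proof -
  interpret prob_space M by fact
  have "measure M (A \<union> B) = measure M A + measure M B - measure M (A \<inter> B)"
    using assms by (intro measure_Un3) (simp_all add: fmeasurable_eq_sets)
  moreover have "measure M (A \<union> B) \<le> 1" by simp
  ultimately show ?thesis by linarith
qed

lemma whp_conj:
  assumes prob: "\<And>n. prob_space (M n)" and "whp M P" and "whp M Q"
  shows "whp M (\<lambda>n r. P n r \<and> Q n r)"
proof -
  obtain E where E: "\<And>n. E n \<in> sets (M n)" "\<And>n. E n \<subseteq> {x \<in> space (M n). P n x}"
    and lim_E: "(\<lambda>n. measure (M n) (E n)) \<longlonglongrightarrow> 1"
    using \<open>whp M P\<close> unfolding whp_def by blast
  obtain F where F: "\<And>n. F n \<in> sets (M n)" "\<And>n. F n \<subseteq> {x \<in> space (M n). Q n x}"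
    and lim_F: "(\<lambda>n. measure (M n) (F n)) \<longlonglongrightarrow> 1"
    using \<open>whp M Q\<close> unfolding whp_def by blast
  have lower: "measure (M n) (E n) + measure (M n) (F n) - 1 \<le> measure (M n) (E n \<inter> F n)" for n
    using prob_space_prob_Int_lower[OF prob E(1) F(1)] .
  have upper: "measure (M n) (E n \<inter> F n) \<le> 1" for n
    using prob_space.prob_le_1[OF prob] .
  have "(\<lambda>n. measure (M n) (E n) + measure (M n) (F n) - 1) \<longlonglongrightarrow> 1 + 1 - 1"
    by (rule tendsto_diff[OF tendsto_add[OF lim_E lim_F] tendsto_const])
  then have lim_lower: "(\<lambda>n. measure (M n) (E n) + measure (M n) (F n) - 1) \<longlonglongrightarrow> 1"
    by simp
  have "(\<lambda>n. measure (M n) (E n \<inter> F n)) \<longlonglongrightarrow> 1"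
    by (rule tendsto_sandwich[OF _ _ lim_lower tendsto_const]) (simp_all add: lower upper)
  moreover have "E n \<inter> F n \<in> sets (M n)" for n
    using E(1) F(1) by (rule sets.Int)
  moreover have "E n \<inter> F n \<subseteq> {x \<in> space (M n). P n x \<and> Q n x}" for n
    using E(2)[of n] F(2)[of n] by blast
  ultimately show ?thesis unfolding whp_def by (intro exI[of _ "\<lambda>n. E n \<inter> F n"]) simp
qed

lemma finite_subset_mono_family:
  fixes S :: "nat \<Rightarrow> 'a set"
  assumes "finite C" "mono S" "\<And>j. j \<in> C \<Longrightarrow> \<exists>t. j \<in> S t"
  shows "\<exists>T. C \<subseteq> S T"
proof -
  obtain f where f: "\<And>j. j \<in> C \<Longrightarrow> j \<in> S (f j)" using assms(3) by metis
  have "j \<in> S (\<Sum>k\<in>C. f k)" if "j \<in> C" for j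
    using f[OF that] monoD[OF assms(2) member_le_sum[OF that _ assms(1)]] by blast
  then show ?thesis by blast
qed

lemma Least_threshold_unit_steps:
  fixes f :: "nat \<Rightarrow> nat"
  assumes step: "\<And>t. f (Suc t) \<le> f t + 1" and "f 0 \<le> W" and "W \<le> f t"
  shows "f (LEAST t. W \<le> f t) = W"
proof -
  define t0 where "t0 = (LEAST t. W \<le> f t)"
  have reached: "W \<le> f t0" unfolding t0_def by (rule LeastI[of _ t]) fact
  show ?thesis
  proof (cases t0)
    case 0
    with reached \<open>f 0 \<le> W\<close> show ?thesis by (simp add: t0_def)
  next
    case (Suc s)
    have "\<not> W \<le> f s" using not_less_Least[of s "\<lambda>t. W \<le> f t"] Suc by (simp add: t0_def)
    with step[of s] reached Suc show ?thesis by (simp add: t0_def)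
  qed
qed

lemma same_kind_refl: "same_kind m m"
  by (cases m) auto

lemma same_kind_trans: "same_kind a b \<Longrightarrow> same_kind b c \<Longrightarrow> same_kind a c"
  by (cases a; cases b; cases c) auto

lemma processed_deliv: "processed r i t j m \<Longrightarrow> deliv r i t = Some (j, m)"
  unfolding processed_def by simp

lemma deliv_imp_processed_same_kind:
  assumes "deliv r i t = Some (j, m)"
  shows "\<exists>t' m'. processed r i t' j m' \<and> same_kind m m'"
proof -
  let ?P = "\<lambda>t. \<exists>m'. deliv r i t = Some (j, m') \<and> same_kind m m'"
  have "?P t" using assms same_kind_refl by blast
  define t0 where "t0 = (LEAST t. ?P t)"
  have "?P t0" unfolding t0_def by (rule LeastI) fact
  then obtain m' where m': "deliv r i t0 = Some (j, m')" "same_kind m m'" by blast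
  have earlier: "\<not> ?P t'" if "t' < t0" for t'
    using that unfolding t0_def by (rule not_less_Least)
  have "processed r i t0 j m'"
    unfolding processed_def using m' earlier same_kind_trans by blast
  with m' show ?thesis by blast
qed

lemma init_set_mono: "mono (init_set r i)"
  unfolding mono_def init_set_def by (blast intro: less_le_trans)

lemma converge_set_mono: "mono (converge_set r i)"
  unfolding mono_def converge_set_def by (blast intro: less_le_trans)

lemma finite_init_set: "finite (init_set r i t)"
proof (rule finite_subset)
  show "init_set r i t \<subseteq> (\<lambda>t'. fst (the (deliv r i t'))) ` {..<t}"
    unfolding init_set_def processed_def by force
qed simp

lemma finite_converge_set: "finite (converge_set r i t)"
proof (rule finite_subset)
  show "converge_set r i t \<subseteq> (\<lambda>t'. fst (the (deliv r i t'))) ` {..<t}"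
    unfolding converge_set_def processed_def by force
qed simp

lemma card_init_set_Suc: "card (init_set r i (Suc t)) \<le> card (init_set r i t) + 1"
proof -
  have "init_set r i (Suc t) \<subseteq> insert (fst (the (deliv r i t))) (init_set r i t)"
    by (auto simp: init_set_def processed_def less_Suc_eq)
  then have "card (init_set r i (Suc t)) \<le> card (insert (fst (the (deliv r i t))) (init_set r i t))"
    by (intro card_mono) (simp_all add: finite_init_set)
  also have "\<dots> \<le> card (init_set r i t) + 1"
    by (simp add: card_insert_if finite_init_set)
  finally show ?thesis .
qed

lemma init_trigger_card:
  assumes "init_trigger W r j = Some t0"
  shows "card (init_set r j t0) = W"
proof -
  obtain t where "W \<le> card (init_set r j t)" and t0: "t0 = (LEAST t. W \<le> card (init_set r j t))"
    using assms unfolding init_trigger_def by (auto split: if_splits)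
  moreover have "init_set r j 0 = {}" unfolding init_set_def by simp
  ultimately show ?thesis
    using Least_threshold_unit_steps[of "\<lambda>t. card (init_set r j t)", OF card_init_set_Suc] by simp
qed

text \<open>The None branch is junk: a process that never reaches the INIT threshold sends no
  CONVERGE message.\<close>

definition converge_msg :: "nat \<Rightarrow> 'v run \<Rightarrow> nat \<Rightarrow> 'v msg" where
  "converge_msg W r j =
     (case init_trigger W r j of
        None \<Rightarrow> Converge False None
      | Some t \<Rightarrow> (if init_values r j t = {input r j}
                   then Converge True (Some (input r j, init_set r j t))
                   else Converge False None))"

lemma converge_msg_is_Converge: "\<exists>b q. converge_msg W r j = Converge b q"
  unfolding converge_msg_def by (auto split: option.split)

lemma correct_sends_Converge_iff:
  "correct_sends W r j (Converge b q) \<longleftrightarrow>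
     sampled r ConvT j \<and> init_trigger W r j \<noteq> None \<and> converge_msg W r j = Converge b q"
  unfolding correct_sends_def converge_msg_def by (cases "init_trigger W r j") auto

lemma correct_sends_Init_iff:
  "correct_sends W r j (Init v) \<longleftrightarrow> sampled r InitT j \<and> v = input r j"
  unfolding correct_sends_def by (auto split: if_split_asm)

lemma correct_sends_unique:
  "correct_sends W r j m \<Longrightarrow> correct_sends W r j m' \<Longrightarrow> same_kind m m' \<Longrightarrow> m = m'"
  by (cases m; cases m') (simp_all add: correct_sends_Init_iff correct_sends_Converge_iff)

lemma valid_run_deliv_sender:
  "valid_run n W B e r \<Longrightarrow> i < n \<Longrightarrow> deliv r i t = Some (j, m) \<Longrightarrow> j < n"
  unfolding valid_run_def by blast

lemma valid_run_reliable_link: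
  "valid_run n W B e r \<Longrightarrow> i < n \<Longrightarrow> j < n \<Longrightarrow> i \<notin> corrupted r \<Longrightarrow> j \<notin> corrupted r
   \<Longrightarrow> correct_sends W r j m \<Longrightarrow> \<exists>t. deliv r i t = Some (j, m)"
  unfolding valid_run_def by blast

lemma valid_run_deliv_correct:
  "valid_run n W B e r \<Longrightarrow> i < n \<Longrightarrow> j < n \<Longrightarrow> i \<notin> corrupted r \<Longrightarrow> j \<notin> corrupted r
   \<Longrightarrow> deliv r i t = Some (j, m) \<Longrightarrow> correct_sends W r j m"
  unfolding valid_run_def by blast

text \<open>Reliable links deliver the message, and since a correct process sends only one message
  of each kind, the first one of that kind that p_i processes is this very message.\<close>

lemma valid_run_correct_processed:
  assumes vr: "valid_run n W B e r"
    and i: "i < n" "i \<notin> corrupted r" and j: "j < n" "j \<notin> corrupted r"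
    and sends: "correct_sends W r j m"
  shows "\<exists>t. processed r i t j m"
proof -
  obtain t where "deliv r i t = Some (j, m)"
    using valid_run_reliable_link[OF vr i(1) j(1) i(2) j(2) sends] ..
  then obtain t' m' where proc: "processed r i t' j m'" and kind: "same_kind m m'"
    using deliv_imp_processed_same_kind by blast
  have "correct_sends W r j m'"
    using valid_run_deliv_correct[OF vr i(1) j(1) i(2) j(2) processed_deliv[OF proc]] .
  then have "m = m'" by (rule correct_sends_unique[OF sends _ kind])
  with proc show ?thesis by blast
qed

lemma committee_correct_finite: "finite (committee n r c - corrupted r)"
  unfolding committee_def by simp

lemma init_trigger_of_correct:
  assumes vr: "valid_run n W B e r" and i: "i < n" "i \<notin> corrupted r"
    and S3_init: "W \<le> card (committee n r InitT - corrupted r)"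
  shows "init_trigger W r i \<noteq> None"
proof -
  let ?C = "committee n r InitT - corrupted r"
  have "\<exists>t. j \<in> init_set r i t" if "j \<in> ?C" for j
  proof -
    from that have j: "j < n" "j \<notin> corrupted r" "sampled r InitT j"
      unfolding committee_def by auto
    then have "correct_sends W r j (Init (input r j))" by (simp add: correct_sends_Init_iff)
    then obtain t where "processed r i t j (Init (input r j))"
      using valid_run_correct_processed[OF vr i j(1,2)] by blast
    with j(3) have "j \<in> init_set r i (Suc t)" unfolding init_set_def by blast
    then show ?thesis ..
  qed
  then obtain T where "?C \<subseteq> init_set r i T"
    using finite_subset_mono_family[OF committee_correct_finite init_set_mono] by blast
  then have "card ?C \<le> card (init_set r i T)" by (rule card_mono[OF finite_init_set])
  with S3_init have "W \<le> card (init_set r i T)" by (rule le_trans)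
  then show ?thesis unfolding init_trigger_def by auto
qed

lemma conv_trigger_of_correct:
  assumes vr: "valid_run n W B e r" and i: "i < n" "i \<notin> corrupted r"
    and S3_init: "W \<le> card (committee n r InitT - corrupted r)"
    and S3_conv: "W \<le> card (committee n r ConvT - corrupted r)"
  shows "conv_trigger W r i \<noteq> None"
proof -
  let ?C = "committee n r ConvT - corrupted r"
  have "\<exists>t. j \<in> converge_set r i t" if "j \<in> ?C" for j
  proof -
    from that have j: "j < n" "j \<notin> corrupted r" "sampled r ConvT j"
      unfolding committee_def by auto
    have "init_trigger W r j \<noteq> None" using init_trigger_of_correct[OF vr j(1,2) S3_init] .
    moreover obtain b q where "converge_msg W r j = Converge b q" using converge_msg_is_Converge by blast
    ultimately have "correct_sends W r j (Converge b q)"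
      using j(3) by (simp add: correct_sends_Converge_iff)
    then obtain t where "processed r i t j (Converge b q)"
      using valid_run_correct_processed[OF vr i j(1,2)] by blast
    with j(3) have "j \<in> converge_set r i (Suc t)" unfolding converge_set_def by blast
    then show ?thesis ..
  qed
  then obtain T where "?C \<subseteq> converge_set r i T"
    using finite_subset_mono_family[OF committee_correct_finite converge_set_mono] by blast
  then have "card ?C \<le> card (converge_set r i T)" by (rule card_mono[OF finite_converge_set])
  with S3_conv have "W \<le> card (converge_set r i T)" by (rule le_trans)
  then show ?thesis unfolding conv_trigger_def by auto
qed

text \<open>Unforgeability is built into the model: a correct process signs INIT only on its own
  input, so the INIT messages batched by a content process all carry its input.\<close>

lemma correct_content_converge_valid_qc:
  assumes vr: "valid_run n W B e r" and j: "j < n" "j \<notin> corrupted r"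
    and sends: "correct_sends W r j (Converge True q)"
  shows "\<exists>v S. q = Some (v, S) \<and> valid_qc W r v S"
proof -
  obtain t where t: "init_trigger W r j = Some t" and msg: "converge_msg W r j = Converge True q"
    using sends by (auto simp: correct_sends_Converge_iff)
  then have init_values_own: "init_values r j t = {input r j}"
    and q: "q = Some (input r j, init_set r j t)"
    unfolding converge_msg_def by (auto split: if_split_asm)
  have "input r k = input r j" if "k \<in> init_set r j t" "k \<notin> corrupted r" for k
  proof -
    obtain t' v where t': "t' < t" "processed r j t' k (Init v)"
      using \<open>k \<in> init_set r j t\<close> unfolding init_set_def by blast
    have dl: "deliv r j t' = Some (k, Init v)" using processed_deliv[OF t'(2)] .
    have "correct_sends W r k (Init v)"
      using valid_run_deliv_correct[OF vr j(1) valid_run_deliv_sender[OF vr j(1) dl] j(2) that(2) dl] .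
    then have "v = input r k" by (simp add: correct_sends_Init_iff)
    moreover have "v \<in> init_values r j t" unfolding init_values_def using t' that(1)
      unfolding init_set_def by blast
    ultimately show ?thesis using init_values_own by simp
  qed
  then have "valid_qc W r (input r j) (init_set r j t)"
    unfolding valid_qc_def using init_trigger_card[OF t] by (auto simp: init_set_def)
  with q show ?thesis by blast
qed

lemma alert_false_imp_correct_content_sender:
  assumes vr: "valid_run n W B e r" and k: "k < n" "k \<notin> corrupted r"
    and S4_conv: "card (committee n r ConvT \<inter> corrupted r) \<le> B"
    and alert: "ba_in W B r k = Some False"
  shows "\<exists>j q. j < n \<and> j \<notin> corrupted r \<and> correct_sends W r j (Converge True q)"
proof -
  obtain t where "conv_trigger W r k = Some t" and "B + 1 \<le> count r k t"
    using alert unfolding ba_in_def by (auto split: option.splits)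
  define X where "X = {j. \<exists>t' < t. \<exists>q. processed r k t' j (Converge True q) \<and> sampled r ConvT j}"
  have "B + 1 \<le> card X" using \<open>B + 1 \<le> count r k t\<close> unfolding X_def count_def .
  have "X \<subseteq> committee n r ConvT"
  proof
    fix j assume "j \<in> X"
    then obtain t' q where "processed r k t' j (Converge True q)" "sampled r ConvT j"
      unfolding X_def by blast
    then show "j \<in> committee n r ConvT"
      using valid_run_deliv_sender[OF vr k(1) processed_deliv] unfolding committee_def by blast
  qed
  moreover have "\<not> X \<subseteq> committee n r ConvT \<inter> corrupted r"
  proof
    assume "X \<subseteq> committee n r ConvT \<inter> corrupted r"
    then have "card X \<le> card (committee n r ConvT \<inter> corrupted r)"
      by (intro card_mono) (simp_all add: committee_def)
    with S4_conv \<open>B + 1 \<le> card X\<close> show False by simp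
  qed
  ultimately obtain j where "j \<in> X" and j_correct: "j \<notin> corrupted r" by blast
  then obtain t' q where proc: "processed r k t' j (Converge True q)"
    unfolding X_def by blast
  have j_lt: "j < n" using valid_run_deliv_sender[OF vr k(1) processed_deliv[OF proc]] .
  have "correct_sends W r j (Converge True q)"
    using valid_run_deliv_correct[OF vr k(1) j_lt k(2) j_correct processed_deliv[OF proc]] .
  with j_lt j_correct show ?thesis by blast
qed

lemma correct_decides:
  assumes vr: "valid_run n W B e r"
    and S3_init: "W \<le> card (committee n r InitT - corrupted r)"
    and S3_conv: "W \<le> card (committee n r ConvT - corrupted r)"
    and S4_conv: "card (committee n r ConvT \<inter> corrupted r) \<le> B"
    and unanimity: "ba_strong_unanimity n W B r" and ba_terminates: "ba_termination n W B r"
    and i: "i < n" "i \<notin> corrupted r"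
  shows "decides W r i"
proof -
  have proposes: "ba_in W B r k \<noteq> None" if "k < n" "k \<notin> corrupted r" for k
    using conv_trigger_of_correct[OF vr that S3_init S3_conv]
    unfolding ba_in_def by (auto split: option.splits)
  then have "\<forall>k<n. k \<notin> corrupted r \<longrightarrow> ba_in W B r k \<noteq> None" by blast
  with ba_terminates i obtain b where b: "ba_out r i = Some b"
    unfolding ba_termination_def by blast
  show ?thesis
  proof (cases b)
    case True
    with b show ?thesis unfolding decides_def by simp
  next
    case False
    have "\<exists>k<n. k \<notin> corrupted r \<and> ba_in W B r k \<noteq> Some True"
    proof (rule ccontr)
      assume "\<not> ?thesis"
      then have "ba_out r i = Some True"
        using unanimity i b unfolding ba_strong_unanimity_def by blast
      with b False show False by simp
    qed
    then obtain k where k: "k < n" "k \<notin> corrupted r" and "ba_in W B r k \<noteq> Some True"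
      by blast
    then have "ba_in W B r k = Some False" using proposes[OF k] by (cases "ba_in W B r k") auto
    then obtain j q where j: "j < n" "j \<notin> corrupted r"
      and sends: "correct_sends W r j (Converge True q)"
      using alert_false_imp_correct_content_sender[OF vr k S4_conv] by blast
    obtain v S where q: "q = Some (v, S)" and qc: "valid_qc W r v S"
      using correct_content_converge_valid_qc[OF vr j sends] by blast
    obtain t where "processed r i t j (Converge True (Some (v, S)))"
      using valid_run_correct_processed[OF vr i j sends] unfolding q ..
    moreover have "sampled r ConvT j" using sends by (simp add: correct_sends_Converge_iff)
    moreover have "ba_out r i = Some False" using b False by simp
    ultimately show ?thesis using qc unfolding decides_def by blast
  qed
qed

theorem mainTheorem4:
  fixes M :: "nat \<Rightarrow> 'v run measure" and eps d :: "nat \<Rightarrow> real"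
  assumes prob: "\<And>n. prob_space (M n)"
    and eps_bounds: "\<forall>\<^sub>F n in sequentially. 1 / (2 * ln (real n)) < eps n \<and> eps n < 1/3"
    and d_bounds: "\<forall>\<^sub>F n in sequentially. 1 / lam n < d n \<and> d n < eps n / 3 - 1 / (3 * lam n)"
    and runs: "\<And>n r. r \<in> space (M n) \<Longrightarrow> valid_run n (Wq d n) (Bq d n) (eps n) r"
    and S3: "\<And>c. whp M (\<lambda>n r. Wq d n \<le> card (committee n r c - corrupted r))"
    and S4: "\<And>c. whp M (\<lambda>n r. card (committee n r c \<inter> corrupted r) \<le> Bq d n)"
    and S5: "\<And>c. whp M (\<lambda>n r. \<forall>X Y. X \<subseteq> committee n r c \<longrightarrow> Y \<subseteq> committee n r c \<longrightarrow>
                  card X = Wq d n \<longrightarrow> card Y = Wq d n \<longrightarrow> Bq d n + 1 \<le> card (X \<inter> Y))"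
    and BA_strong_unanimity: "whp M (\<lambda>n r. ba_strong_unanimity n (Wq d n) (Bq d n) r)"
    and BA_agreement: "whp M (\<lambda>n r. ba_agreement n r)"
    and BA_termination: "whp M (\<lambda>n r. ba_termination n (Wq d n) (Bq d n) r)"
  shows "whp M (\<lambda>n r. \<forall>i < n. i \<notin> corrupted r \<longrightarrow> decides (Wq d n) r i)"
proof -
  have "whp M (\<lambda>n r. Wq d n \<le> card (committee n r InitT - corrupted r) \<and>
     Wq d n \<le> card (committee n r ConvT - corrupted r) \<and>
     card (committee n r ConvT \<inter> corrupted r) \<le> Bq d n \<and>
     ba_strong_unanimity n (Wq d n) (Bq d n) r \<and> ba_termination n (Wq d n) (Bq d n) r)"
    by (intro whp_conj[OF prob] S3 S4 BA_strong_unanimity BA_termination)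
  then show ?thesis
    by (rule whp_mono) (blast intro: correct_decides[OF runs])
qed

end
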